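(* For $\alpha\ge0$ let $f(r^2)=1+\frac{r^2}{1+r^2}$, $q(u,v)=1+\alpha(\tfrac13u^2+\tfrac23v^2)$, $$a(u,v)=\frac{q(u,v)^2}{f(u^2+v^2)^2},\quad b(u,v)=\frac{q(u,v)^{5/2}}{f(u^2+v^2)^3},\quad \mathcal B(s,u,v)=1+u^2+v^2-a(u,v)s^2+b(u,v)s^3 .$$ Then for every $(u,v)\in\mathbb{R}^2$, as a function of $s$, $\mathcal B$ has a nondegenerate local maximum at $s=0$ with value $h(u,v)=1+u^2+v^2$, a local minimum at $s_m=\tfrac{2a}{3b}$ with value $\mathcal B(s_m,u,v)=1+u^2+v^2-\tfrac{4}{27}q(u,v)$, and returns to the value $h$ first at $s_b=a/b$ (with positive $s$-derivative there); the separatrix action is $$\jmath(u,v)=\int_0^{a/b}\sqrt{2(h(u,v)-\mathcal B(s,u,v))}\,ds=\frac{4\sqrt2\,a^{5/2}}{15\,b^2}=\frac{4\sqrt2}{15}f(u^2+v^2),$$ which depends only on $h$. Hence any divergence-free field realising $\mathcal B$ as its field strength in fieldline coordinates $(s,u,v)$ is weakly isodrastic, while for $\alpha\neq0$ the minimum value $\mathcal B(s_m,u,v)$ of the field strength along fieldlines is not constant on the level sets $\{h=\mathrm{const}\}$, so such a field is not omnigenous.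
   Context: Fieldline coordinates: $(u,v)$ label fieldlines and $s$ is signed arclength along them from the transverse surface $s=0$, which plays the role of $\Sigma^-$ (the set of nondegenerate local maxima of field strength along fieldlines). A field realising $\mathcal B$ is weakly isodrastic if the separatrix action $\jmath$ is constant on level sets of $h=|B|$ on $\Sigma^-$; omnigenity (for fields with flux function, here $h$) requires in particular that the minimum of $|B|$ along fieldlines be the same for all fieldlines of a flux surface. *)

theory Defs
  imports "HOL-Analysis.Analysis"
begin

definition fstr :: "real \<Rightarrow> real" where
  "fstr r2 = 1 + r2 / (1 + r2)"

definition qf :: "real \<Rightarrow> real \<Rightarrow> real \<Rightarrow> real" where
  "qf \<alpha> u v = 1 + \<alpha> * (u\<^sup>2 / 3 + 2 * v\<^sup>2 / 3)"

definition acoef :: "real \<Rightarrow> real \<Rightarrow> real \<Rightarrow> real" where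
  "acoef \<alpha> u v = (qf \<alpha> u v)\<^sup>2 / (fstr (u\<^sup>2 + v\<^sup>2))\<^sup>2"

definition bcoef :: "real \<Rightarrow> real \<Rightarrow> real \<Rightarrow> real" where
  "bcoef \<alpha> u v = (qf \<alpha> u v) powr (5/2) / (fstr (u\<^sup>2 + v\<^sup>2)) ^ 3"

definition BB :: "real \<Rightarrow> real \<Rightarrow> real \<Rightarrow> real \<Rightarrow> real" where
  "BB \<alpha> s u v = 1 + u\<^sup>2 + v\<^sup>2 - acoef \<alpha> u v * s\<^sup>2 + bcoef \<alpha> u v * s ^ 3"

definition hh :: "real \<Rightarrow> real \<Rightarrow> real" where
  "hh u v = 1 + u\<^sup>2 + v\<^sup>2"

definition jact :: "real \<Rightarrow> real \<Rightarrow> real \<Rightarrow> real" where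
  "jact \<alpha> u v = integral {0 .. acoef \<alpha> u v / bcoef \<alpha> u v}
      (\<lambda>s. sqrt (2 * (hh u v - BB \<alpha> s u v)))"

text \<open>Weak isodrasticity: the separatrix action is constant on level sets of h on Sigma^-
  (here Sigma^- is the surface s = 0, parametrised by all (u,v)).\<close>
definition weakly_isodrastic :: "(real \<Rightarrow> real \<Rightarrow> real) \<Rightarrow> (real \<Rightarrow> real \<Rightarrow> real) \<Rightarrow> bool" where
  "weakly_isodrastic j h \<longleftrightarrow> (\<forall>u v u' v'. h u v = h u' v' \<longrightarrow> j u v = j u' v')"

end

theory Submission
  imports Defs
begin

text \<open>Along each fieldline the field strength is the cubic \<open>h - a s\<^sup>2 + b s\<^sup>3\<close> with
  \<open>a, b > 0\<close>; its critical points, its return to \<open>h\<close> at \<open>a/b\<close> and its separatrix action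
  \<open>4 sqrt 2 a\<^sup>5\<^sup>/\<^sup>2 / (15 b\<^sup>2)\<close> are elementary calculus. The coefficients are tuned so that
  \<open>a\<^sup>5\<^sup>/\<^sup>2 / b\<^sup>2 = f(u\<^sup>2 + v\<^sup>2)\<close> depends on \<open>h\<close> alone, giving weak isodrasticity, whereas
  \<open>a\<^sup>3 / b\<^sup>2 = q(u, v)\<close> does not, so the minimum \<open>h - 4 q / 27\<close> varies along level sets of \<open>h\<close>
  when \<open>\<alpha> \<noteq> 0\<close>.\<close>

definition cubic_well :: "real \<Rightarrow> real \<Rightarrow> real \<Rightarrow> real \<Rightarrow> real" where
  "cubic_well h a b s = h - a * s\<^sup>2 + b * s ^ 3"

lemma cubic_well_0 [simp]: "cubic_well h a b 0 = h"
  by (simp add: cubic_well_def)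

lemma cubic_well_drop: "h - cubic_well h a b s = s\<^sup>2 * (a - b * s)"
  by (simp add: cubic_well_def algebra_simps power2_eq_square power3_eq_cube)

lemma cubic_well_local_max:
  assumes "a > 0"
  shows "\<forall>\<^sub>F s in at 0. cubic_well h a b s < h"
proof -
  have "\<forall>\<^sub>F s in at 0. b * s < a"
    using order_tendstoD(2)[OF tendsto_mult_right_zero[OF tendsto_ident_at] assms] by simp
  then show ?thesis
    using eventually_neq_at_within[of 0 0 UNIV]
  proof eventually_elim
    case (elim s)
    then have "0 < s\<^sup>2 * (a - b * s)" by simp
    then show ?case using cubic_well_drop[of h a b s] by simp
  qed
qed

lemma cubic_well_local_min:
  assumes "a > 0" "b > 0"
  defines "sm \<equiv> 2 * a / (3 * b)"
  shows "\<forall>\<^sub>F s in nhds sm. cubic_well h a b sm \<le> cubic_well h a b s"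
proof -
  have "sm > 0" using assms by (simp add: sm_def)
  have factor: "cubic_well h a b s - cubic_well h a b sm = b * (s - sm)\<^sup>2 * (s + sm / 2)" for s
    using assms by (simp add: cubic_well_def sm_def field_simps power2_eq_square power3_eq_cube)
  have "\<forall>\<^sub>F s in nhds sm. s > 0"
    using order_tendstoD(1)[OF filterlim_ident \<open>sm > 0\<close>] .
  then show ?thesis
  proof eventually_elim
    case (elim s)
    then have "0 \<le> b * (s - sm)\<^sup>2 * (s + sm / 2)" using \<open>sm > 0\<close> \<open>b > 0\<close> by simp
    then show ?case using factor[of s] by simp
  qed
qed

lemma cubic_well_below_level:
  assumes "b > 0" "0 < s" "s < a / b"
  shows "cubic_well h a b s < h"
proof -
  have "0 < s\<^sup>2 * (a - b * s)" using assms by (simp add: field_simps)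
  then show ?thesis using cubic_well_drop[of h a b s] by simp
qed

lemma cubic_well_return: "b \<noteq> 0 \<Longrightarrow> cubic_well h a b (a / b) = h"
  by (simp add: cubic_well_def field_simps power2_eq_square power3_eq_cube)

lemma cubic_well_min_value: "b \<noteq> 0 \<Longrightarrow> cubic_well h a b (2 * a / (3 * b)) = h - 4 / 27 * (a ^ 3 / b\<^sup>2)"
  by (simp add: cubic_well_def field_simps power2_eq_square power3_eq_cube)

lemma deriv_cubic_well: "deriv (cubic_well h a b) = (\<lambda>s. 3 * b * s\<^sup>2 - 2 * a * s)"
proof
  fix s show "deriv (cubic_well h a b) s = 3 * b * s\<^sup>2 - 2 * a * s"
    unfolding cubic_well_def[abs_def]
    by (rule DERIV_imp_deriv) (auto intro!: derivative_eq_intros simp: power2_eq_square)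
qed

lemma deriv_cubic_well_0: "deriv (cubic_well h a b) 0 = 0"
  by (simp add: deriv_cubic_well)

lemma deriv2_cubic_well_0: "deriv (deriv (cubic_well h a b)) 0 = - 2 * a"
  unfolding deriv_cubic_well by (rule DERIV_imp_deriv) (auto intro!: derivative_eq_intros)

lemma deriv_cubic_well_return_pos: "a > 0 \<Longrightarrow> b > 0 \<Longrightarrow> deriv (cubic_well h a b) (a / b) > 0"
  by (simp add: deriv_cubic_well field_simps power2_eq_square)

lemma powr_five_halves: "x \<ge> 0 \<Longrightarrow> x powr (5/2) = x\<^sup>2 * sqrt x"
proof -
  assume "x \<ge> 0"
  have "x powr (5/2) = x powr 2 * x powr (1/2)" by (simp flip: powr_add)
  then show ?thesis using \<open>x \<ge> 0\<close> by (simp add: powr_half_sqrt)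
qed


lemma separatrix_antiderivative:
  assumes "b > 0" "b * s < a"
  shows "((\<lambda>s. sqrt 2 / b\<^sup>2 * (2/5 * (a - b * s)\<^sup>2 - 2 * a / 3 * (a - b * s)) * sqrt (a - b * s))
           has_real_derivative s * sqrt 2 * sqrt (a - b * s)) (at s)"
proof -
  obtain r where r: "r > 0" and a: "a = b * s + r\<^sup>2"
    using assms by (intro that[of "sqrt (a - b * s)"]) auto
  \<comment> \<open>after eliminating \<open>a\<close>, the derivative identity is polynomial in \<open>r = sqrt (a - b * s)\<close>\<close>
  show ?thesis
    unfolding a using assms(1) r
    by (auto intro!: derivative_eq_intros)
      (simp add: field_simps, simp add: algebra_simps power2_eq_square power4_eq_xxxx)
qed

lemma cubic_well_action:
  assumes "a > 0" "b > 0"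
  shows "((\<lambda>s. sqrt (2 * (h - cubic_well h a b s))) has_integral
           4 * sqrt 2 * a powr (5/2) / (15 * b\<^sup>2)) {0 .. a / b}"
proof -
  define F where "F s = sqrt 2 / b\<^sup>2 * (2/5 * (a - b * s)\<^sup>2 - 2 * a / 3 * (a - b * s)) * sqrt (a - b * s)" for s
  have "((\<lambda>s. sqrt (2 * (h - cubic_well h a b s))) has_integral F (a / b) - F 0) {0 .. a / b}"
  proof (rule fundamental_theorem_of_calculus_interior)
    show "0 \<le> a / b" using assms by simp
    show "continuous_on {0 .. a / b} F" unfolding F_def by (intro continuous_intros)
  next
    fix s assume s: "s \<in> {0<..<a / b}"
    then have "b * s < a" using assms by (simp add: field_simps)
    have "sqrt (2 * (h - cubic_well h a b s)) = s * sqrt 2 * sqrt (a - b * s)"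
      using s by (simp add: cubic_well_drop real_sqrt_mult)
    then show "(F has_vector_derivative sqrt (2 * (h - cubic_well h a b s))) (at s)"
      using separatrix_antiderivative[OF \<open>b > 0\<close> \<open>b * s < a\<close>]
      by (simp add: F_def[abs_def] has_real_derivative_iff_has_vector_derivative)
  qed
  moreover have "F (a / b) - F 0 = 4 * sqrt 2 * a powr (5/2) / (15 * b\<^sup>2)"
    using assms by (simp add: F_def powr_five_halves field_simps power2_eq_square)
  ultimately show ?thesis by simp
qed

lemma fstr_ge_1: "r2 \<ge> 0 \<Longrightarrow> fstr r2 \<ge> 1"
  by (simp add: fstr_def)

lemma qf_ge_1: "\<alpha> \<ge> 0 \<Longrightarrow> qf \<alpha> u v \<ge> 1"
  by (simp add: qf_def)

lemma separatrix_coefficient_ratios: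
  fixes q f :: real
  assumes "q > 0" "f > 0"
  shows "(q\<^sup>2 / f\<^sup>2) powr (5/2) / (q powr (5/2) / f ^ 3)\<^sup>2 = f"
    and "(q\<^sup>2 / f\<^sup>2) ^ 3 / (q powr (5/2) / f ^ 3)\<^sup>2 = q"
proof -
  have sq: "(sqrt q)\<^sup>2 = q" using assms by simp
  have "sqrt (q\<^sup>2 / f\<^sup>2) = q / f" using assms by (simp add: real_sqrt_divide)
  then show "(q\<^sup>2 / f\<^sup>2) powr (5/2) / (q powr (5/2) / f ^ 3)\<^sup>2 = f"
    using assms by (simp add: powr_five_halves power_divide power_mult_distrib sq field_simps eval_nat_numeral)
  show "(q\<^sup>2 / f\<^sup>2) ^ 3 / (q powr (5/2) / f ^ 3)\<^sup>2 = q"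
    using assms by (simp add: powr_five_halves power_divide power_mult_distrib sq field_simps eval_nat_numeral)
qed

lemma BB_eq_cubic_well: "BB \<alpha> s u v = cubic_well (hh u v) (acoef \<alpha> u v) (bcoef \<alpha> u v) s"
  by (simp add: BB_def cubic_well_def hh_def)

lemma
  assumes "\<alpha> \<ge> 0"
  shows acoef_pos: "acoef \<alpha> u v > 0" and bcoef_pos: "bcoef \<alpha> u v > 0"
    and acoef_powr_div_bcoef: "acoef \<alpha> u v powr (5/2) / (bcoef \<alpha> u v)\<^sup>2 = fstr (u\<^sup>2 + v\<^sup>2)"
    and acoef_cube_div_bcoef: "acoef \<alpha> u v ^ 3 / (bcoef \<alpha> u v)\<^sup>2 = qf \<alpha> u v"
proof -
  have q: "qf \<alpha> u v > 0" and f: "fstr (u\<^sup>2 + v\<^sup>2) > 0"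
    using qf_ge_1[OF assms, of u v] fstr_ge_1[of "u\<^sup>2 + v\<^sup>2"] by auto
  show "acoef \<alpha> u v > 0" "bcoef \<alpha> u v > 0"
    using q f by (simp_all add: acoef_def bcoef_def)
  show "acoef \<alpha> u v powr (5/2) / (bcoef \<alpha> u v)\<^sup>2 = fstr (u\<^sup>2 + v\<^sup>2)"
       "acoef \<alpha> u v ^ 3 / (bcoef \<alpha> u v)\<^sup>2 = qf \<alpha> u v"
    unfolding acoef_def bcoef_def using separatrix_coefficient_ratios[OF q f] by simp_all
qed

theorem mainTheorem8:
  fixes \<alpha> :: real
  assumes "\<alpha> \<ge> 0"
  shows
    "(\<forall>u v.
        let a = acoef \<alpha> u v; b = bcoef \<alpha> u v; B = (\<lambda>s. BB \<alpha> s u v);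
            sm = 2 * a / (3 * b); sb = a / b
        in
        \<comment> \<open>nondegenerate local maximum at s = 0 with value h\<close>
          B 0 = hh u v
        \<and> deriv B 0 = 0 \<and> deriv (deriv B) 0 < 0
        \<and> (\<forall>\<^sub>F s in at 0. B s < B 0)
        \<comment> \<open>local minimum at s_m with the stated value\<close>
        \<and> 0 < sm
        \<and> (\<forall>\<^sub>F s in nhds sm. B sm \<le> B s)
        \<and> B sm = 1 + u\<^sup>2 + v\<^sup>2 - 4 / 27 * qf \<alpha> u v
        \<comment> \<open>first return to the value h at s_b = a/b, with positive derivative\<close>
        \<and> 0 < sb
        \<and> B sb = hh u v
        \<and> (\<forall>s. 0 < s \<and> s < sb \<longrightarrow> B s < hh u v)
        \<and> deriv B sb > 0
        \<comment> \<open>separatrix action\<close>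
        \<and> ((\<lambda>s. sqrt (2 * (hh u v - B s))) has_integral
              (4 * sqrt 2 * a powr (5/2) / (15 * b\<^sup>2))) {0 .. sb}
        \<and> jact \<alpha> u v = 4 * sqrt 2 * a powr (5/2) / (15 * b\<^sup>2)
        \<and> jact \<alpha> u v = 4 * sqrt 2 / 15 * fstr (u\<^sup>2 + v\<^sup>2))
   \<and> weakly_isodrastic (jact \<alpha>) hh
   \<and> (\<alpha> \<noteq> 0 \<longrightarrow>
        (\<exists>u v u' v'. hh u v = hh u' v' \<and>
           BB \<alpha> (2 * acoef \<alpha> u v / (3 * bcoef \<alpha> u v)) u v
             \<noteq> BB \<alpha> (2 * acoef \<alpha> u' v' / (3 * bcoef \<alpha> u' v')) u' v'))"
proof -
  have B: "BB \<alpha> s u v = cubic_well (hh u v) (acoef \<alpha> u v) (bcoef \<alpha> u v) s" for s u v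
    by (rule BB_eq_cubic_well)
  note a = acoef_pos[OF assms] and b = bcoef_pos[OF assms]
  have action: "((\<lambda>s. sqrt (2 * (hh u v - BB \<alpha> s u v))) has_integral
      4 * sqrt 2 * acoef \<alpha> u v powr (5/2) / (15 * (bcoef \<alpha> u v)\<^sup>2)) {0 .. acoef \<alpha> u v / bcoef \<alpha> u v}"
    for u v unfolding B using cubic_well_action[OF a b] .
  then have j: "jact \<alpha> u v = 4 * sqrt 2 * acoef \<alpha> u v powr (5/2) / (15 * (bcoef \<alpha> u v)\<^sup>2)" for u v
    unfolding jact_def by (rule integral_unique)
  have j_fstr: "jact \<alpha> u v = 4 * sqrt 2 / 15 * fstr (u\<^sup>2 + v\<^sup>2)" for u v
    unfolding j acoef_powr_div_bcoef[OF assms, of u v, symmetric] by simp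
  have min_value: "BB \<alpha> (2 * acoef \<alpha> u v / (3 * bcoef \<alpha> u v)) u v = 1 + u\<^sup>2 + v\<^sup>2 - 4 / 27 * qf \<alpha> u v" for u v
    using b[of u v] by (simp add: B cubic_well_min_value acoef_cube_div_bcoef[OF assms] hh_def)
  have local_min: "\<forall>\<^sub>F s in nhds (2 * acoef \<alpha> u v / (3 * bcoef \<alpha> u v)).
      BB \<alpha> (2 * acoef \<alpha> u v / (3 * bcoef \<alpha> u v)) u v \<le> BB \<alpha> s u v" for u v
    unfolding B by (rule cubic_well_local_min[OF a b])
  have "weakly_isodrastic (jact \<alpha>) hh"
    unfolding weakly_isodrastic_def hh_def j_fstr by (simp add: add.assoc)
  moreover have "\<exists>u v u' v'. hh u v = hh u' v' \<and>
      BB \<alpha> (2 * acoef \<alpha> u v / (3 * bcoef \<alpha> u v)) u v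
        \<noteq> BB \<alpha> (2 * acoef \<alpha> u' v' / (3 * bcoef \<alpha> u' v')) u' v'" if "\<alpha> \<noteq> 0"
    using that by (intro exI[of _ 1] exI[of _ 0] exI[of _ 0] exI[of _ 1]) (simp add: min_value qf_def hh_def)
  ultimately show ?thesis
    using a b b[THEN order.strict_implies_not_eq, symmetric] action j j_fstr min_value local_min
    by (auto simp: Let_def B hh_def deriv_cubic_well_0 deriv2_cubic_well_0 cubic_well_local_max
        cubic_well_return cubic_well_below_level deriv_cubic_well_return_pos)
qed

end
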